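(* Let $E$ be a $KB$-space, let $\mathfrak{B}$ be a Boolean subalgebra of $\mathfrak{B}(E)$, let $\xi$ be a forward filtration in $\mathfrak{B}$ and let $T\colon E\to E$ be a $\mathfrak{B}$-Volterra operator. Let $B'$ be the band generated by $\{(\mathbf{s}^k(x))_{k=0}^\infty: x\in\mathcal{M}_b(\xi)\}$ in the Banach lattice $\big(\bigoplus_{k=0}^\infty\mathcal{M}_b(L^k(\xi))\big)_{\ell_\infty}$. For each $l\ge1$, the operator $(\hat{T}_\xi^l)^{!}((y_k)_{k=0}^\infty)=(\mathbf{s}^k\hat{T}_\xi^l y_0)_{k=0}^\infty$ extends to a norm continuous operator $(\hat{T}_\xi^l)^{!}\colon B'\to\big(\bigoplus_{k=0}^\infty\mathcal{M}_b(L^k(\xi))\big)_{\ell_\infty}$ such that $(\hat{T}_\xi^l)^{!}=((\hat{T}_\xi^1)^{!})^l$; i.e. the correspondence $!$ is a discrete semigroup morphism between the semigroups generated by $\hat{T}_\xi$ and $(\hat{T}_\xi^1)^{!}$.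
   Context: A $KB$-space is a Banach lattice in which every increasing norm bounded sequence is norm convergent. $\mathfrak{B}(E)$ is the Boolean algebra of all order projections on $E$ (zero $\mathbf 0$, unit $\mathbf 1=I_E$, $\pi\le\rho$ iff $\pi\rho=\pi$). A positive operator $T$ is $\mathfrak{B}$-Volterra if for all $\pi\in\mathfrak{B}$, $x,y\in E$, $\pi x=\pi y$ implies $\pi Tx=\pi Ty$. A forward filtration in $\mathfrak{B}$ is a map $\xi\colon\{0,1,\dots,\infty\}\to\mathfrak{B}$ with $\xi_n\le\xi_{n+1}$, $\xi_0=\mathbf 0$, $\xi_\infty=\mathbf 1$; $L(\xi)_0=\xi_0$, $L(\xi)_n=\xi_{n+1}$ ($n\ge1$), $L^0(\xi)=\xi$. $\mathcal{M}_b(\xi)$ is the Banach lattice of sequences $(x_n)_{n\ge1}$ in $E$ with $\xi_nx_m=x_n$ for $m\ge n\ge1$ and $\sup_n\|x_n\|<\infty$ (coordinatewise order, sup norm). $\hat{T}_\xi((x_n))=(\xi_nTx_n)$; $\mathbf{s}((x_n)_{n\ge1})=(x_{n+1})_{n\ge1}$ maps $\mathcal{M}_b(L^k(\xi))$ to $\mathcal{M}_b(L^{k+1}(\xi))$, $\mathbf{s}^k$ is the $k$-fold composite and $\mathbf{s}^0$ the identity. $(\bigoplus_k X_k)_{\ell_\infty}$ is the space of norm bounded sequences with pointwise order and sup norm. *)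

theory Defs
  imports "HOL-Analysis.Analysis"
begin

definition babs :: "'a::{lattice,uminus} \<Rightarrow> 'a" where
  "babs x = sup x (- x)"

class banach_lattice = banach + ordered_real_vector + lattice +
  assumes norm_lattice_mono: "sup x (- x) \<le> sup y (- y) \<Longrightarrow> norm x \<le> norm y"

definition KB_space :: "'a::banach_lattice itself \<Rightarrow> bool" where
  "KB_space _ \<longleftrightarrow> (\<forall>f::nat \<Rightarrow> 'a. incseq f \<and> bounded (range f) \<longrightarrow> convergent f)"

definition is_lub_in :: "'b::order set \<Rightarrow> 'b set \<Rightarrow> 'b \<Rightarrow> bool" where
  "is_lub_in W D s \<longleftrightarrow> s \<in> W \<and> (\<forall>d\<in>D. d \<le> s) \<and> (\<forall>u\<in>W. (\<forall>d\<in>D. d \<le> u) \<longrightarrow> s \<le> u)"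

definition is_band :: "'a::banach_lattice set \<Rightarrow> bool" where
  "is_band B \<longleftrightarrow> 0 \<in> B \<and> (\<forall>x\<in>B. \<forall>y\<in>B. x + y \<in> B) \<and> (\<forall>c. \<forall>x\<in>B. c *\<^sub>R x \<in> B)
     \<and> (\<forall>x\<in>B. \<forall>y. babs y \<le> babs x \<longrightarrow> y \<in> B)
     \<and> (\<forall>D s. D \<subseteq> B \<and> is_lub_in UNIV D s \<longrightarrow> s \<in> B)"

definition disj_compl :: "'a::banach_lattice set \<Rightarrow> 'a set" where
  "disj_compl B = {x. \<forall>b\<in>B. inf (babs x) (babs b) = 0}"

definition is_projection_band :: "'a::banach_lattice set \<Rightarrow> bool" where
  "is_projection_band B \<longleftrightarrow> is_band B \<and> (\<forall>x. \<exists>b\<in>B. \<exists>c\<in>disj_compl B. x = b + c)"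

definition order_projections :: "('a::banach_lattice \<Rightarrow> 'a) set" where
  "order_projections = {P. \<exists>B. is_projection_band B \<and> (\<forall>x. P x \<in> B \<and> x - P x \<in> disj_compl B)}"

text \<open>Boolean subalgebra of the Boolean algebra of all order projections
  (meet = composition, complement = I - P, join = P + Q - PQ, zero = 0, unit = identity).\<close>
definition boolean_subalgebra :: "('a::banach_lattice \<Rightarrow> 'a) set \<Rightarrow> bool" where
  "boolean_subalgebra \<BB> \<longleftrightarrow> \<BB> \<subseteq> order_projections \<and> (\<lambda>_. 0) \<in> \<BB> \<and> id \<in> \<BB>
     \<and> (\<forall>P\<in>\<BB>. \<forall>Q\<in>\<BB>. P \<circ> Q \<in> \<BB>)
     \<and> (\<forall>P\<in>\<BB>. \<forall>Q\<in>\<BB>. (\<lambda>x. P x + Q x - P (Q x)) \<in> \<BB>)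
     \<and> (\<forall>P\<in>\<BB>. (\<lambda>x. x - P x) \<in> \<BB>)"

definition proj_le :: "('a \<Rightarrow> 'a) \<Rightarrow> ('a \<Rightarrow> 'a) \<Rightarrow> bool" where
  "proj_le P Q \<longleftrightarrow> P \<circ> Q = P"

text \<open>Forward filtration: \<xi>_0 = 0, \<xi>_n \<le> \<xi>_(n+1), all \<xi>_n in the subalgebra;
  the value \<xi>_\<infinity> = 1 is implicit (identity, which belongs to every Boolean subalgebra).\<close>
definition forward_filtration :: "('a::banach_lattice \<Rightarrow> 'a) set \<Rightarrow> (nat \<Rightarrow> 'a \<Rightarrow> 'a) \<Rightarrow> bool" where
  "forward_filtration \<BB> \<xi> \<longleftrightarrow> (\<forall>n. \<xi> n \<in> \<BB>) \<and> \<xi> 0 = (\<lambda>_. 0) \<and> (\<forall>n. proj_le (\<xi> n) (\<xi> (Suc n)))"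

definition positive_operator :: "('a::banach_lattice \<Rightarrow> 'a) \<Rightarrow> bool" where
  "positive_operator T \<longleftrightarrow> linear T \<and> (\<forall>x. 0 \<le> x \<longrightarrow> 0 \<le> T x)"

definition volterra :: "('a::banach_lattice \<Rightarrow> 'a) set \<Rightarrow> ('a \<Rightarrow> 'a) \<Rightarrow> bool" where
  "volterra \<BB> T \<longleftrightarrow> positive_operator T \<and>
     (\<forall>P\<in>\<BB>. \<forall>x y. P x = P y \<longrightarrow> P (T x) = P (T y))"

definition Lshift :: "(nat \<Rightarrow> 'a \<Rightarrow> 'a) \<Rightarrow> nat \<Rightarrow> 'a \<Rightarrow> 'a" where
  "Lshift \<xi> n = (if n = 0 then \<xi> 0 else \<xi> (Suc n))"

text \<open>Sequences (x_n)_(n\<ge>1) are represented as functions nat \<Rightarrow> 'a with the dummy value x 0 = 0.\<close>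
definition Mb :: "(nat \<Rightarrow> 'a::banach_lattice \<Rightarrow> 'a) \<Rightarrow> (nat \<Rightarrow> 'a) set" where
  "Mb \<xi> = {x. x 0 = 0 \<and> (\<forall>n m. 1 \<le> n \<and> n \<le> m \<longrightarrow> \<xi> n (x m) = x n) \<and> bounded (range x)}"

definition hatT :: "(nat \<Rightarrow> 'a \<Rightarrow> 'a) \<Rightarrow> ('a \<Rightarrow> 'a) \<Rightarrow> (nat \<Rightarrow> 'a) \<Rightarrow> (nat \<Rightarrow> 'a)" where
  "hatT \<xi> T x = (\<lambda>n. \<xi> n (T (x n)))"

definition sshift :: "(nat \<Rightarrow> 'a::zero) \<Rightarrow> (nat \<Rightarrow> 'a)" where
  "sshift x = (\<lambda>n. if n = 0 then 0 else x (Suc n))"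

definition Winf :: "(nat \<Rightarrow> 'a::banach_lattice \<Rightarrow> 'a) \<Rightarrow> (nat \<Rightarrow> nat \<Rightarrow> 'a) set" where
  "Winf \<xi> = {Y. (\<forall>k. Y k \<in> Mb ((Lshift ^^ k) \<xi>)) \<and> (\<exists>C. \<forall>k n. norm (Y k n) \<le> C)}"

definition normW :: "(nat \<Rightarrow> nat \<Rightarrow> 'a::real_normed_vector) \<Rightarrow> real" where
  "normW Y = Sup (range (\<lambda>(k, n). norm (Y k n)))"

definition band_in :: "(nat \<Rightarrow> nat \<Rightarrow> 'a::banach_lattice) set \<Rightarrow> (nat \<Rightarrow> nat \<Rightarrow> 'a) set \<Rightarrow> bool" where
  "band_in W A \<longleftrightarrow> A \<subseteq> W \<and> (\<lambda>k n. 0) \<in> A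
     \<and> (\<forall>Y\<in>A. \<forall>Z\<in>A. (\<lambda>k n. Y k n + Z k n) \<in> A)
     \<and> (\<forall>c. \<forall>Y\<in>A. (\<lambda>k n. c *\<^sub>R Y k n) \<in> A)
     \<and> (\<forall>Y\<in>A. \<forall>Z\<in>W. (\<forall>k n. babs (Z k n) \<le> babs (Y k n)) \<longrightarrow> Z \<in> A)
     \<and> (\<forall>D s. D \<subseteq> A \<and> is_lub_in W D s \<longrightarrow> s \<in> A)"

definition band_generated :: "(nat \<Rightarrow> nat \<Rightarrow> 'a::banach_lattice) set \<Rightarrow> (nat \<Rightarrow> nat \<Rightarrow> 'a) set \<Rightarrow> (nat \<Rightarrow> nat \<Rightarrow> 'a) set" where
  "band_generated W S = \<Inter>{A. band_in W A \<and> S \<subseteq> A}"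

definition Bprime :: "(nat \<Rightarrow> 'a::banach_lattice \<Rightarrow> 'a) \<Rightarrow> (nat \<Rightarrow> nat \<Rightarrow> 'a) set" where
  "Bprime \<xi> = band_generated (Winf \<xi>) {(\<lambda>k. (sshift ^^ k) x) | x. x \<in> Mb \<xi>}"

end

(*
  Write T^ for hatT xi T.  The extension of T^^l to B' is Y |-> (s^k (T^^l (Y 0)))_k: it
  reads only the component Y 0, agrees with the required map on the generating orbits
  (s^k x)_k, and obeys the semigroup law because T^^l (T^^m y) = T^^(l+m) y.  For Y in B'
  the component Y 0 lies in M_b(xi), because the whole l-infinity sum is itself a band
  containing the orbits; and T^ maps M_b(xi) into itself precisely by the Volterra
  property, xi_n T x_m = xi_n T x_n for n <= m.

  Continuity comes from norm (T^^l) <= norm T ^ l, which rests on two facts about Banach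
  lattices: order projections are contractions, since |P x| <= |P x + (x - P x)| when
  P x and x - P x are disjoint; and positive operators are automatically bounded, since
  otherwise the sum x of 2^-n v_n over positive unit vectors with norm (T v_n) > 4^n
  would satisfy norm (T x) >= 2^n for every n.
*)
theory Submission
  imports Defs "HOL-Library.Lattice_Algebras"
begin

context banach_lattice begin
subclass lattice_ab_group_add ..
end

section \<open>Lattice-ordered groups and disjoint complements\<close>

lemma babs_ge: "(x::'a::lattice_ab_group_add) \<le> babs x" "- x \<le> babs x"
  by (simp_all add: babs_def)

lemma babs_nonneg: "0 \<le> babs (x::'a::lattice_ab_group_add)"
  using add_mono[OF babs_ge(1)[of x] babs_ge(2)[of x]] by simp

lemma babs_eq_self: "0 \<le> (x::'a::lattice_ab_group_add) \<Longrightarrow> babs x = x"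
  by (simp add: babs_def minus_le_self_iff sup.absorb1)

lemma babs_minus: "babs (- (x::'a::lattice_ab_group_add)) = babs x"
  by (simp add: babs_def sup_commute)

lemma babs_eq_0_iff: "babs (x::'a::lattice_ab_group_add) = 0 \<longleftrightarrow> x = 0"
  by (simp add: babs_def)

lemma babs_triangle: "babs ((x::'a::lattice_ab_group_add) + y) \<le> babs x + babs y"
proof -
  have "x + y \<le> babs x + babs y"
    by (intro add_mono babs_ge)
  moreover have "- (x + y) \<le> babs x + babs y"
    using add_mono[OF babs_ge(2) babs_ge(2), of x y] by simp
  ultimately show ?thesis
    by (simp add: babs_def[of "x + y"])
qed

lemma babs_scaleR_le:
  "babs (c *\<^sub>R (x::'a::{lattice_ab_group_add, ordered_real_vector})) \<le> \<bar>c\<bar> *\<^sub>R babs x"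
proof -
  have "\<bar>c\<bar> *\<^sub>R x \<le> \<bar>c\<bar> *\<^sub>R babs x"
    and "\<bar>c\<bar> *\<^sub>R (- x) \<le> \<bar>c\<bar> *\<^sub>R babs x"
    by (intro scaleR_left_mono babs_ge abs_ge_zero)+
  moreover have "c *\<^sub>R x = \<bar>c\<bar> *\<^sub>R x \<and> - (c *\<^sub>R x) = \<bar>c\<bar> *\<^sub>R (- x)
      \<or> c *\<^sub>R x = \<bar>c\<bar> *\<^sub>R (- x) \<and> - (c *\<^sub>R x) = \<bar>c\<bar> *\<^sub>R x"
    by (cases "0 \<le> c") simp_all
  ultimately show ?thesis
    unfolding babs_def[of "c *\<^sub>R x"] by auto
qed

lemma inf_add_le_nonneg:
  fixes u v w :: "'a::lattice_ab_group_add"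
  assumes "0 \<le> u" "0 \<le> v" "0 \<le> w"
  shows "inf (u + v) w \<le> inf u w + inf v w"
proof -
  have "w \<le> w + v" "w \<le> u + w" "w \<le> w + w"
    using assms by (simp_all add: add_increasing add_increasing2)
  then have "inf (u + v) w \<le> inf (inf (u + v) (w + v)) (inf (u + w) (w + w))"
    by (intro le_infI) (auto intro: order_trans[OF inf_le2])
  also have "\<dots> = inf u w + inf v w"
    by (simp only: add_inf_distrib_left add_inf_distrib_right)
  finally show ?thesis .
qed

lemma inf_scaleR_le:
  fixes a b :: "'a::{lattice_ab_group_add, ordered_real_vector}"
  assumes "0 < s"
  shows "inf (s *\<^sub>R a) (s *\<^sub>R b) \<le> s *\<^sub>R inf a b"
proof -
  have "inverse s *\<^sub>R inf (s *\<^sub>R a) (s *\<^sub>R b) \<le> inverse s *\<^sub>R (s *\<^sub>R a)"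
    using assms by (intro scaleR_left_mono) simp_all
  moreover have "inverse s *\<^sub>R inf (s *\<^sub>R a) (s *\<^sub>R b) \<le> inverse s *\<^sub>R (s *\<^sub>R b)"
    using assms by (intro scaleR_left_mono) simp_all
  ultimately have "inverse s *\<^sub>R inf (s *\<^sub>R a) (s *\<^sub>R b) \<le> inf a b"
    using assms by simp
  then have "s *\<^sub>R (inverse s *\<^sub>R inf (s *\<^sub>R a) (s *\<^sub>R b)) \<le> s *\<^sub>R inf a b"
    using assms by (intro scaleR_left_mono) simp_all
  then show ?thesis
    using assms by simp
qed

lemma babs_le_babs_add_disjoint:
  fixes b c :: "'a::lattice_ab_group_add"
  assumes "inf (babs b) (babs c) = 0"
  shows "babs b \<le> babs (b + c)"
proof -
  have "babs b \<le> babs (b + c) + babs c"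
    using babs_triangle[of "b + c" "- c"] by (simp add: babs_minus)
  then have "babs b = inf (babs (b + c) + babs c) (babs b)"
    by (simp add: inf.absorb2)
  also have "\<dots> \<le> inf (babs (b + c)) (babs b) + inf (babs c) (babs b)"
    by (rule inf_add_le_nonneg[OF babs_nonneg babs_nonneg babs_nonneg])
  also have "\<dots> \<le> babs (b + c)"
    using assms by (simp add: inf.commute[of "babs c"])
  finally show ?thesis .
qed

lemma inf_babs_eq_0I:
  "inf (babs x) (babs y) \<le> 0 \<Longrightarrow> inf (babs (x::'a::lattice_ab_group_add)) (babs y) = 0"
  by (rule order.antisym) (simp_all add: babs_nonneg)

lemma disj_compl_add:
  assumes "x \<in> disj_compl B" "y \<in> disj_compl B"
  shows "x + y \<in> disj_compl B"
  unfolding disj_compl_def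
proof (intro CollectI ballI inf_babs_eq_0I)
  fix b assume "b \<in> B"
  then have "inf (babs x) (babs b) = 0" "inf (babs y) (babs b) = 0"
    using assms by (auto simp: disj_compl_def)
  then have "inf (babs x + babs y) (babs b) \<le> 0"
    using inf_add_le_nonneg[OF babs_nonneg babs_nonneg babs_nonneg, of x y b] by simp
  moreover have "inf (babs (x + y)) (babs b) \<le> inf (babs x + babs y) (babs b)"
    by (rule inf_mono[OF babs_triangle order_refl])
  ultimately show "inf (babs (x + y)) (babs b) \<le> 0"
    by (rule order_trans[rotated])
qed

lemma disj_compl_scaleR:
  assumes "x \<in> disj_compl B"
  shows "c *\<^sub>R x \<in> disj_compl B"
  unfolding disj_compl_def
proof (intro CollectI ballI inf_babs_eq_0I)
  fix b assume "b \<in> B"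
  then have "inf (babs x) (babs b) = 0"
    using assms by (auto simp: disj_compl_def)
  define s where "s = \<bar>c\<bar> + 1"
  have "babs (c *\<^sub>R x) \<le> \<bar>c\<bar> *\<^sub>R babs x"
    by (rule babs_scaleR_le)
  also have "\<dots> \<le> s *\<^sub>R babs x"
    by (rule scaleR_right_mono) (simp_all add: s_def babs_nonneg)
  finally have "babs (c *\<^sub>R x) \<le> s *\<^sub>R babs x" .
  moreover have "babs b \<le> s *\<^sub>R babs b"
    using scaleR_right_mono[OF _ babs_nonneg, of 1 s b] by (simp add: s_def)
  ultimately have "inf (babs (c *\<^sub>R x)) (babs b) \<le> inf (s *\<^sub>R babs x) (s *\<^sub>R babs b)"
    by (rule inf_mono)
  also have "\<dots> \<le> s *\<^sub>R inf (babs x) (babs b)"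
    by (rule inf_scaleR_le) (simp add: s_def add_nonneg_pos)
  finally show "inf (babs (c *\<^sub>R x)) (babs b) \<le> 0"
    using \<open>inf (babs x) (babs b) = 0\<close> by simp
qed

lemma eq_0_if_mem_disj_compl: "x \<in> B \<Longrightarrow> x \<in> disj_compl B \<Longrightarrow> x = 0"
  by (auto simp: disj_compl_def babs_eq_0_iff)

lemma band_add: "is_band B \<Longrightarrow> x \<in> B \<Longrightarrow> y \<in> B \<Longrightarrow> x + y \<in> B"
  and band_scaleR: "is_band B \<Longrightarrow> x \<in> B \<Longrightarrow> c *\<^sub>R x \<in> B"
  by (simp_all add: is_band_def)

lemma band_diff: "is_band B \<Longrightarrow> x \<in> B \<Longrightarrow> y \<in> B \<Longrightarrow> x - y \<in> B"
  using band_add[of B x "(-1) *\<^sub>R y"] band_scaleR[of B y "-1"] by simp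

section \<open>Order projections\<close>

lemma order_projectionsE:
  assumes "P \<in> order_projections"
  obtains B where "is_band B" "\<And>x. P x \<in> B" "\<And>x. x - P x \<in> disj_compl B"
proof -
  obtain B where B: "is_projection_band B" "\<And>x. P x \<in> B \<and> x - P x \<in> disj_compl B"
    using assms unfolding order_projections_def by blast
  show thesis
  proof (rule that)
    show "is_band B"
      using B(1) by (simp add: is_projection_band_def)
    show "P x \<in> B" "x - P x \<in> disj_compl B" for x
      using B(2) by simp_all
  qed
qed

lemma order_projection_eqI:
  assumes "is_band B" "\<And>x. P x \<in> B" "\<And>x. x - P x \<in> disj_compl B"
    and "b \<in> B" "x - b \<in> disj_compl B"
  shows "P x = b"
proof -
  have in_band: "P x - b \<in> B"
    using assms by (simp add: band_diff)
  have "P x - b = (x - b) + (-1) *\<^sub>R (x - P x)"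
    by simp
  also have "\<dots> \<in> disj_compl B"
    using assms(3,5) by (intro disj_compl_add disj_compl_scaleR)
  finally have "P x - b \<in> disj_compl B" .
  with in_band have "P x - b = 0"
    by (rule eq_0_if_mem_disj_compl)
  then show ?thesis
    by simp
qed

lemma linear_order_projection:
  assumes "P \<in> order_projections"
  shows "linear P"
proof -
  obtain B where B: "is_band B" "\<And>x. P x \<in> B" "\<And>x. x - P x \<in> disj_compl B"
    using order_projectionsE[OF assms] by blast
  show ?thesis
  proof (rule linearI)
    fix x y c
    show "P (x + y) = P x + P y"
    proof (rule order_projection_eqI[OF B])
      show "P x + P y \<in> B"
        using B by (simp add: band_add)
      have "x + y - (P x + P y) = (x - P x) + (y - P y)"
        by simp
      also have "\<dots> \<in> disj_compl B"
        by (rule disj_compl_add[OF B(3) B(3)])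
      finally show "x + y - (P x + P y) \<in> disj_compl B" .
    qed
    show "P (c *\<^sub>R x) = c *\<^sub>R P x"
    proof (rule order_projection_eqI[OF B])
      show "c *\<^sub>R P x \<in> B"
        using B by (simp add: band_scaleR)
      have "c *\<^sub>R x - c *\<^sub>R P x = c *\<^sub>R (x - P x)"
        by (simp add: scaleR_diff_right)
      also have "\<dots> \<in> disj_compl B"
        by (rule disj_compl_scaleR[OF B(3)])
      finally show "c *\<^sub>R x - c *\<^sub>R P x \<in> disj_compl B" .
    qed
  qed
qed

lemma order_projection_idem:
  assumes "P \<in> order_projections"
  shows "P (P x) = P x"
proof -
  obtain B where B: "is_band B" "\<And>x. P x \<in> B" "\<And>x. x - P x \<in> disj_compl B"
    using order_projectionsE[OF assms] by blast
  have "P x - P x \<in> disj_compl B"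
    using disj_compl_scaleR[OF B(3), of 0 x] by simp
  then show ?thesis
    by (rule order_projection_eqI[OF B B(2)])
qed

lemma babs_order_projection_le:
  assumes "P \<in> order_projections"
  shows "babs (P x) \<le> babs x"
proof -
  obtain B where B: "is_band B" "\<And>x. P x \<in> B" "\<And>x. x - P x \<in> disj_compl B"
    using order_projectionsE[OF assms] by blast
  have "inf (babs (P x)) (babs (x - P x)) = 0"
    using B(2)[of x] B(3)[of x] unfolding disj_compl_def by (simp add: inf_commute)
  then have "babs (P x) \<le> babs (P x + (x - P x))"
    by (rule babs_le_babs_add_disjoint)
  then show ?thesis
    by simp
qed

section \<open>Positive operators on Banach lattices\<close>

lemma norm_le_norm_if_babs_le: "babs x \<le> babs y \<Longrightarrow> norm (x::'a::banach_lattice) \<le> norm y"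
  unfolding babs_def by (rule norm_lattice_mono)

lemma norm_babs: "norm (babs (x::'a::banach_lattice)) = norm x"
  by (intro order.antisym norm_le_norm_if_babs_le) (simp_all add: babs_eq_self babs_nonneg)

lemma norm_mono_nonneg: "0 \<le> (x::'a::banach_lattice) \<Longrightarrow> x \<le> y \<Longrightarrow> norm x \<le> norm y"
  by (rule norm_le_norm_if_babs_le) (simp add: babs_eq_self)

lemma norm_order_projection_le: "P \<in> order_projections \<Longrightarrow> norm (P x) \<le> norm x"
  by (rule norm_le_norm_if_babs_le) (rule babs_order_projection_le)

lemma closed_nonneg: "closed {x::'a::banach_lattice. 0 \<le> x}"
proof (rule closed_sequential_limits[THEN iffD2], intro allI impI, elim conjE)
  fix f :: "nat \<Rightarrow> 'a" and z
  assume f: "\<forall>n. f n \<in> {x. 0 \<le> x}" and lim: "f \<longlonglongrightarrow> z"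
  define w where "w = sup (- z) 0"
  have "norm w \<le> norm (f n - z)" for n
  proof (rule norm_le_norm_if_babs_le)
    have "- z \<le> f n - z"
      using f by simp
    then have "w \<le> sup (f n - z) 0"
      unfolding w_def by (rule sup_mono) simp
    also have "\<dots> \<le> babs (f n - z)"
      by (intro le_supI babs_ge(1) babs_nonneg)
    finally show "babs w \<le> babs (f n - z)"
      by (simp add: babs_eq_self w_def)
  qed
  moreover have "(\<lambda>n. norm (f n - z)) \<longlonglongrightarrow> 0"
    using lim by (intro tendsto_norm_zero LIM_zero)
  ultimately have "norm w \<le> 0"
    by (intro LIMSEQ_le_const) auto
  then have "sup (- z) 0 = 0"
    by (simp add: w_def)
  then have "- z \<le> 0"
    using sup_ge1[of "- z" 0] by simp
  then show "z \<in> {x. 0 \<le> x}"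
    by simp
qed

lemma le_suminf_nonneg:
  fixes f :: "nat \<Rightarrow> 'a::banach_lattice"
  assumes "summable f" "\<And>n. 0 \<le> f n"
  shows "f m \<le> suminf f"
proof -
  have "(\<lambda>N. (\<Sum>i<N. f i) - f m) \<longlonglongrightarrow> suminf f - f m"
    using assms(1) by (intro tendsto_diff summable_LIMSEQ) auto
  moreover have "\<forall>\<^sub>F N in sequentially. (\<Sum>i<N. f i) - f m \<in> {x. 0 \<le> x}"
  proof (rule eventually_sequentiallyI[of "Suc m"])
    fix N assume "Suc m \<le> N"
    then have "(\<Sum>i<N. f i) - f m = (\<Sum>i\<in>{..<N} - {m}. f i)"
      using sum.remove[of "{..<N}" m f] by simp
    then show "(\<Sum>i<N. f i) - f m \<in> {x. 0 \<le> x}"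
      by (simp add: assms(2) sum_nonneg)
  qed
  ultimately have "suminf f - f m \<in> {x. 0 \<le> x}"
    by (intro Lim_in_closed_set[OF closed_nonneg]) auto
  then show ?thesis
    by simp
qed

lemma positive_operator_mono:
  assumes "positive_operator T" "x \<le> y"
  shows "T x \<le> T y"
proof -
  have "0 \<le> T (y - x)"
    using assms by (simp add: positive_operator_def)
  then show ?thesis
    using assms(1) by (simp add: positive_operator_def linear_diff)
qed

lemma norm_positive_operator_le_babs:
  fixes T :: "'a::banach_lattice \<Rightarrow> 'a"
  assumes "positive_operator T"
  shows "norm (T x) \<le> norm (T (babs x))"
proof (rule norm_le_norm_if_babs_le)
  have lin: "linear T"
    using assms by (simp add: positive_operator_def)
  have "T x \<le> T (babs x)" "T (- x) \<le> T (babs x)"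
    using positive_operator_mono[OF assms] babs_ge by blast+
  then have "babs (T x) \<le> T (babs x)"
    by (simp add: babs_def linear_neg[OF lin])
  also have "\<dots> = babs (T (babs x))"
    using assms babs_nonneg[of x] by (simp add: positive_operator_def babs_eq_self)
  finally show "babs (T x) \<le> babs (T (babs x))" .
qed

lemma positive_operator_bounded_on_nonneg_unit_ball:
  fixes T :: "'a::banach_lattice \<Rightarrow> 'a"
  assumes "positive_operator T"
  shows "\<exists>K. \<forall>x. 0 \<le> x \<and> norm x \<le> 1 \<longrightarrow> norm (T x) \<le> K"
proof (rule ccontr)
  assume "\<not> ?thesis"
  have lin: "linear T"
    using assms by (simp add: positive_operator_def)
  from \<open>\<not> ?thesis\<close> have "\<forall>n::nat. \<exists>v. 0 \<le> v \<and> norm v \<le> 1 \<and> 4 ^ n < norm (T v)"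
    by (simp add: not_le)
  then obtain v where v: "\<And>n. 0 \<le> v n" "\<And>n. norm (v n) \<le> 1" "\<And>n. 4 ^ n < norm (T (v n))"
    by metis
  define f where "f n = (1 / 2) ^ n *\<^sub>R v n" for n
  have f_nonneg: "0 \<le> f n" for n
    by (simp add: f_def v(1) scaleR_nonneg_nonneg)
  have "summable f"
  proof (rule summable_comparison_test)
    show "\<exists>N. \<forall>n\<ge>N. norm (f n) \<le> (1 / 2) ^ n"
      using v(2) by (auto simp: f_def intro!: mult_left_le)
  qed (simp add: summable_geometric)
  have large: "2 ^ n < norm (T (suminf f))" for n
  proof -
    have "(2::real) ^ n = (1 / 2) ^ n * 4 ^ n"
      by (simp flip: power_mult_distrib)
    also have "\<dots> < (1 / 2) ^ n * norm (T (v n))"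
      by (rule mult_strict_left_mono[OF v(3)]) simp
    also have "\<dots> = norm (T (f n))"
      unfolding f_def linear_scale[OF lin] by simp
    also have "\<dots> \<le> norm (T (suminf f))"
    proof (rule norm_mono_nonneg)
      show "0 \<le> T (f n)"
        using assms f_nonneg by (simp add: positive_operator_def)
      show "T (f n) \<le> T (suminf f)"
        by (rule positive_operator_mono[OF assms le_suminf_nonneg[OF \<open>summable f\<close> f_nonneg]])
    qed
    finally show ?thesis .
  qed
  obtain n where "norm (T (suminf f)) < 2 ^ n"
    using real_arch_pow[of 2] by auto
  with large[of n] show False
    by linarith
qed

lemma positive_operator_bounded:
  fixes T :: "'a::banach_lattice \<Rightarrow> 'a"
  assumes "positive_operator T"
  obtains K where "0 \<le> K" "\<And>x. norm (T x) \<le> K * norm x"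
proof -
  obtain K where K: "\<And>x. 0 \<le> x \<Longrightarrow> norm x \<le> 1 \<Longrightarrow> norm (T x) \<le> K"
    using positive_operator_bounded_on_nonneg_unit_ball[OF assms] by blast
  have lin: "linear T"
    using assms by (simp add: positive_operator_def)
  have "norm (T x) \<le> K * norm x" for x
  proof (cases "x = 0")
    case True
    then show ?thesis
      using K[of 0] linear_0[OF lin] by simp
  next
    case False
    define u where "u = (1 / norm x) *\<^sub>R babs x"
    have "0 \<le> u" "norm u \<le> 1"
      using False by (simp_all add: u_def babs_nonneg norm_babs scaleR_nonneg_nonneg)
    have "norm (T x) \<le> norm (T (babs x))"
      by (rule norm_positive_operator_le_babs[OF assms])
    also have "T (babs x) = norm x *\<^sub>R T u"
      using False by (simp add: u_def linear_scale[OF lin])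
    also have "norm (norm x *\<^sub>R T u) \<le> K * norm x"
      using mult_right_mono[OF K[OF \<open>0 \<le> u\<close> \<open>norm u \<le> 1\<close>] norm_ge_zero[of x]]
      by (simp add: mult.commute)
    finally show ?thesis .
  qed
  moreover have "0 \<le> K"
    using K[of 0] linear_0[OF lin] by simp
  ultimately show ?thesis
    using that by blast
qed

section \<open>Filtrations, the spaces \<open>Mb\<close> and the operator \<open>hatT\<close>\<close>

lemma forward_filtration_order_projection:
  "boolean_subalgebra \<BB> \<Longrightarrow> forward_filtration \<BB> \<xi> \<Longrightarrow> \<xi> n \<in> order_projections"
  unfolding boolean_subalgebra_def forward_filtration_def by blast

lemma forward_filtration_absorb:
  assumes "boolean_subalgebra \<BB>" "forward_filtration \<BB> \<xi>" "n \<le> m"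
  shows "\<xi> n (\<xi> m x) = \<xi> n x"
  using assms(3)
proof (induction m arbitrary: x rule: dec_induct)
  case base
  show ?case
    using order_projection_idem[OF forward_filtration_order_projection[OF assms(1,2)]] .
next
  case (step m)
  have "\<xi> m (\<xi> (Suc m) x) = \<xi> m x"
    using assms(2) by (simp add: forward_filtration_def proj_le_def fun_eq_iff)
  then show ?case
    by (metis step.IH)
qed

lemma Lshift_funpow: "(Lshift ^^ k) \<xi> n = (if n = 0 then \<xi> 0 else \<xi> (n + k))"
  by (induction k arbitrary: n) (simp_all add: Lshift_def)

lemma sshift_funpow: "(sshift ^^ k) x n = (if n = 0 \<and> k \<noteq> 0 then 0 else x (n + k))"
  by (induction k arbitrary: n) (auto simp: sshift_def)

lemma norm_sshift_funpow_le:
  fixes x :: "nat \<Rightarrow> 'a::real_normed_vector"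
  assumes "\<And>m. norm (x m) \<le> C"
  shows "norm ((sshift ^^ k) x n) \<le> C"
proof -
  have "0 \<le> C"
    using norm_ge_zero[of "x 0"] assms[of 0] by linarith
  then show ?thesis
    using assms by (simp add: sshift_funpow)
qed

lemma Mb_add:
  assumes "\<And>n. linear (\<pi> n)" "x \<in> Mb \<pi>" "y \<in> Mb \<pi>"
  shows "(\<lambda>n. x n + y n) \<in> Mb \<pi>"
proof -
  obtain C D where "\<And>n. norm (x n) \<le> C" "\<And>n. norm (y n) \<le> D"
    using assms(2,3) by (auto simp: Mb_def bounded_iff)
  then have "norm (x n + y n) \<le> C + D" for n
    by (meson add_mono norm_triangle_le)
  then show ?thesis
    using assms by (auto simp: Mb_def bounded_iff linear_add)
qed

lemma Mb_scaleR:
  assumes "\<And>n. linear (\<pi> n)" "x \<in> Mb \<pi>"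
  shows "(\<lambda>n. c *\<^sub>R x n) \<in> Mb \<pi>"
proof -
  obtain C where "\<And>n. norm (x n) \<le> C"
    using assms(2) by (auto simp: Mb_def bounded_iff)
  then have "norm (c *\<^sub>R x n) \<le> \<bar>c\<bar> * C" for n
    by (simp add: mult_left_mono)
  then show ?thesis
    using assms by (auto simp: Mb_def bounded_iff linear_scale)
qed

lemma orbit_in_Winf:
  assumes "x \<in> Mb \<xi>"
  shows "(\<lambda>k. (sshift ^^ k) x) \<in> Winf \<xi>"
proof -
  obtain C where "\<And>n. norm (x n) \<le> C"
    using assms by (auto simp: Mb_def bounded_iff)
  then have bound: "norm ((sshift ^^ k) x n) \<le> C" for k n
    by (rule norm_sshift_funpow_le)
  have "(sshift ^^ k) x \<in> Mb ((Lshift ^^ k) \<xi>)" for k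
    unfolding Mb_def
  proof (intro CollectI conjI allI impI)
    show "(sshift ^^ k) x 0 = 0"
      using assms by (simp add: Mb_def sshift_funpow)
    show "bounded (range ((sshift ^^ k) x))"
      unfolding bounded_iff using bound by blast
    fix n m :: nat
    assume "1 \<le> n \<and> n \<le> m"
    then show "(Lshift ^^ k) \<xi> n ((sshift ^^ k) x m) = (sshift ^^ k) x n"
      using assms by (simp add: Mb_def Lshift_funpow sshift_funpow)
  qed
  then show ?thesis
    using bound by (auto simp: Winf_def)
qed

lemma orbit_in_Bprime: "x \<in> Mb \<xi> \<Longrightarrow> (\<lambda>k. (sshift ^^ k) x) \<in> Bprime \<xi>"
  unfolding Bprime_def band_generated_def by blast

lemma band_in_Winf:
  assumes "\<And>n. linear (\<xi> n)"
  shows "band_in (Winf \<xi>) (Winf \<xi>)"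
proof -
  have lin: "linear ((Lshift ^^ k) \<xi> n)" for k n
    using assms by (simp add: Lshift_funpow)
  have "(\<lambda>k n. Y k n + Z k n) \<in> Winf \<xi>" if Y: "Y \<in> Winf \<xi>" and Z: "Z \<in> Winf \<xi>" for Y Z
  proof -
    obtain C where "\<And>k n. norm (Y k n) \<le> C"
      using Y unfolding Winf_def by blast
    moreover obtain D where "\<And>k n. norm (Z k n) \<le> D"
      using Z unfolding Winf_def by blast
    ultimately have "norm (Y k n + Z k n) \<le> C + D" for k n
      by (meson add_mono norm_triangle_le)
    then show ?thesis
      using that Mb_add[of "(Lshift ^^ _) \<xi>", OF lin] by (auto simp: Winf_def)
  qed
  moreover have "(\<lambda>k n. c *\<^sub>R Y k n) \<in> Winf \<xi>" if Y: "Y \<in> Winf \<xi>" for Y c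
  proof -
    obtain C where "\<And>k n. norm (Y k n) \<le> C"
      using Y unfolding Winf_def by blast
    then have "norm (c *\<^sub>R Y k n) \<le> \<bar>c\<bar> * C" for k n
      by (simp add: mult_left_mono)
    then show ?thesis
      using that Mb_scaleR[of "(Lshift ^^ _) \<xi>", OF lin] by (auto simp: Winf_def)
  qed
  moreover have "(\<lambda>k n. 0) \<in> Winf \<xi>"
    using linear_0[OF lin] by (auto simp: Winf_def Mb_def)
  ultimately show ?thesis
    unfolding band_in_def is_lub_in_def by blast
qed

lemma Bprime_subset_Winf:
  assumes "\<And>n. linear (\<xi> n)"
  shows "Bprime \<xi> \<subseteq> Winf \<xi>"
  unfolding Bprime_def band_generated_def
  by (rule Inter_lower) (use band_in_Winf[of \<xi>] assms orbit_in_Winf in blast)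

lemma Bprime_component_0:
  assumes "\<And>n. linear (\<xi> n)" "Y \<in> Bprime \<xi>"
  shows "Y 0 \<in> Mb \<xi>"
proof -
  have "Y \<in> Winf \<xi>"
    using Bprime_subset_Winf[of \<xi>] assms by blast
  then have "Y 0 \<in> Mb ((Lshift ^^ 0) \<xi>)"
    unfolding Winf_def by blast
  then show ?thesis
    by simp
qed

lemma hatT_funpow_add:
  assumes "\<And>n. linear (\<xi> n)" "linear T"
  shows "(hatT \<xi> T ^^ l) (\<lambda>n. x n + y n) = (\<lambda>n. (hatT \<xi> T ^^ l) x n + (hatT \<xi> T ^^ l) y n)"
  by (induction l) (simp_all add: hatT_def assms linear_add)

lemma hatT_funpow_scaleR:
  assumes "\<And>n. linear (\<xi> n)" "linear T"
  shows "(hatT \<xi> T ^^ l) (\<lambda>n. c *\<^sub>R x n) = (\<lambda>n. c *\<^sub>R (hatT \<xi> T ^^ l) x n)"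
  by (induction l) (simp_all add: hatT_def assms linear_scale)

lemma hatT_funpow_diff:
  assumes "\<And>n. linear (\<xi> n)" "linear T"
  shows "(hatT \<xi> T ^^ l) (\<lambda>n. x n - y n) = (\<lambda>n. (hatT \<xi> T ^^ l) x n - (hatT \<xi> T ^^ l) y n)"
  by (induction l) (simp_all add: hatT_def assms linear_diff)

lemma norm_hatT_funpow_le:
  assumes "\<And>n y. norm (\<xi> n y) \<le> norm y" "\<And>y. norm (T y) \<le> K * norm y" "0 \<le> K"
  shows "norm ((hatT \<xi> T ^^ l) x n) \<le> K ^ l * norm (x n)"
proof (induction l)
  case (Suc l)
  have "norm ((hatT \<xi> T ^^ Suc l) x n) \<le> norm (T ((hatT \<xi> T ^^ l) x n))"
    by (simp add: hatT_def assms(1))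
  also have "\<dots> \<le> K * norm ((hatT \<xi> T ^^ l) x n)"
    by (rule assms(2))
  also have "\<dots> \<le> K * (K ^ l * norm (x n))"
    by (rule mult_left_mono[OF Suc.IH assms(3)])
  finally show ?case
    by simp
qed simp

lemma hatT_Mb:
  assumes "boolean_subalgebra \<BB>" "forward_filtration \<BB> \<xi>" "volterra \<BB> T" "x \<in> Mb \<xi>"
  shows "hatT \<xi> T x \<in> Mb \<xi>"
proof -
  have proj: "\<xi> n \<in> order_projections" for n
    using assms(1,2) by (rule forward_filtration_order_projection)
  have pos: "positive_operator T"
    using assms(3) by (simp add: volterra_def)
  obtain K where K: "0 \<le> K" "\<And>y. norm (T y) \<le> K * norm y"
    using positive_operator_bounded[OF pos] by blast
  obtain C where "\<And>n. norm (x n) \<le> C"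
    using assms(4) by (auto simp: Mb_def bounded_iff)
  moreover have "norm (hatT \<xi> T x n) \<le> K * norm (x n)" for n
    using norm_order_projection_le[OF proj, of n "T (x n)"] K(2)[of "x n"] by (simp add: hatT_def)
  ultimately have "norm (hatT \<xi> T x n) \<le> K * C" for n
    by (meson K(1) mult_left_mono order_trans)
  moreover have "\<xi> n (hatT \<xi> T x m) = hatT \<xi> T x n" if "1 \<le> n" "n \<le> m" for n m
  proof -
    have "\<xi> n (x m) = \<xi> n (x n)"
      using assms(4) that by (simp add: Mb_def)
    then have Volterra: "\<xi> n (T (x m)) = \<xi> n (T (x n))"
      using assms(2,3) by (simp add: volterra_def forward_filtration_def)
    have "\<xi> n (hatT \<xi> T x m) = \<xi> n (T (x m))"
      using forward_filtration_absorb[OF assms(1,2) \<open>n \<le> m\<close>] by (simp add: hatT_def)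
    then show ?thesis
      by (simp add: Volterra hatT_def)
  qed
  moreover have "\<xi> 0 = (\<lambda>_. 0)"
    using assms(2) by (simp add: forward_filtration_def)
  ultimately show ?thesis
    by (auto simp: Mb_def hatT_def bounded_iff)
qed

lemma hatT_funpow_Mb:
  assumes "boolean_subalgebra \<BB>" "forward_filtration \<BB> \<xi>" "volterra \<BB> T" "x \<in> Mb \<xi>"
  shows "(hatT \<xi> T ^^ l) x \<in> Mb \<xi>"
  by (induction l) (simp_all add: assms hatT_Mb[OF assms(1-3)])

section \<open>Extending the powers of \<open>hatT\<close> to \<open>Bprime\<close>\<close>

definition hatT_shriek ::
    "(nat \<Rightarrow> 'a \<Rightarrow> 'a) \<Rightarrow> ('a \<Rightarrow> 'a) \<Rightarrow> nat \<Rightarrow> (nat \<Rightarrow> nat \<Rightarrow> 'a) \<Rightarrow> nat \<Rightarrow> nat \<Rightarrow> 'a::zero"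
  where "hatT_shriek \<xi> T l Y = (\<lambda>k. (sshift ^^ k) ((hatT \<xi> T ^^ l) (Y 0)))"

lemma hatT_shriek_orbit:
  "hatT_shriek \<xi> T l (\<lambda>k. (sshift ^^ k) x) = (\<lambda>k. (sshift ^^ k) ((hatT \<xi> T ^^ l) x))"
  by (simp add: hatT_shriek_def)

lemma hatT_shriek_compose:
  "hatT_shriek \<xi> T l (hatT_shriek \<xi> T m Y) = hatT_shriek \<xi> T (l + m) Y"
  by (simp add: hatT_shriek_def funpow_add)

lemma hatT_shriek_funpow:
  assumes "1 \<le> l"
  shows "(hatT_shriek \<xi> T 1 ^^ l) Y = hatT_shriek \<xi> T l Y"
  using assms
proof (induction l rule: dec_induct)
  case (step l)
  then show ?case
    using hatT_shriek_compose[of \<xi> T 1 l Y] by simp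
qed simp

lemma hatT_shriek_add:
  assumes "\<And>n. linear (\<xi> n)" "linear T"
  shows "hatT_shriek \<xi> T l (\<lambda>k n. Y k n + Z k n)
    = (\<lambda>k n. hatT_shriek \<xi> T l Y k n + hatT_shriek \<xi> T l Z k n)"
  by (simp add: hatT_shriek_def hatT_funpow_add[OF assms] sshift_funpow fun_eq_iff)

lemma hatT_shriek_scaleR:
  assumes "\<And>n. linear (\<xi> n)" "linear T"
  shows "hatT_shriek \<xi> T l (\<lambda>k n. c *\<^sub>R Y k n) = (\<lambda>k n. c *\<^sub>R hatT_shriek \<xi> T l Y k n)"
  by (simp add: hatT_shriek_def hatT_funpow_scaleR[OF assms] sshift_funpow fun_eq_iff)

lemma hatT_shriek_in_Bprime:
  assumes "boolean_subalgebra \<BB>" "forward_filtration \<BB> \<xi>" "volterra \<BB> T" "Y \<in> Bprime \<xi>"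
  shows "hatT_shriek \<xi> T l Y \<in> Bprime \<xi>"
proof -
  have "\<And>n. linear (\<xi> n)"
    using linear_order_projection forward_filtration_order_projection[OF assms(1,2)] by blast
  then have "Y 0 \<in> Mb \<xi>"
    using assms(4) by (rule Bprime_component_0)
  then show ?thesis
    unfolding hatT_shriek_def by (intro orbit_in_Bprime hatT_funpow_Mb[OF assms(1-3)])
qed

lemma norm_le_normW:
  assumes "\<And>k n. norm (Y k n) \<le> C"
  shows "norm (Y k n) \<le> normW Y"
  unfolding normW_def
  by (rule cSup_upper) (use assms in \<open>auto intro!: bdd_aboveI[of _ C]\<close>)

lemma normW_le:
  assumes "\<And>k n. norm (Y k n) \<le> C"
  shows "normW Y \<le> C"
  unfolding normW_def
  by (rule cSup_least) (auto simp: assms)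

lemma normW_hatT_shriek_diff_le:
  assumes "\<And>n. \<xi> n \<in> order_projections" "linear T"
    and "0 \<le> K" "\<And>y. norm (T y) \<le> K * norm y"
    and "Y \<in> Winf \<xi>" "Z \<in> Winf \<xi>"
  shows "normW (\<lambda>k n. hatT_shriek \<xi> T l Z k n - hatT_shriek \<xi> T l Y k n)
    \<le> K ^ l * normW (\<lambda>k n. Z k n - Y k n)"
proof (rule normW_le)
  have lin: "\<And>n. linear (\<xi> n)"
    using assms(1) by (rule linear_order_projection)
  obtain C D where "\<And>k n. norm (Y k n) \<le> C" "\<And>k n. norm (Z k n) \<le> D"
    using assms(5,6) unfolding Winf_def by blast
  then have "norm (Z k n - Y k n) \<le> D + C" for k n
    by (meson add_mono norm_triangle_le_diff)
  then have "norm (Z 0 m - Y 0 m) \<le> normW (\<lambda>k n. Z k n - Y k n)" for m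
    using norm_le_normW[of "\<lambda>k n. Z k n - Y k n"] by blast
  then have "K ^ l * norm (Z 0 m - Y 0 m) \<le> K ^ l * normW (\<lambda>k n. Z k n - Y k n)" for m
    using assms(3) by (simp add: mult_left_mono)
  moreover have "norm ((hatT \<xi> T ^^ l) (\<lambda>n. Z 0 n - Y 0 n) m) \<le> K ^ l * norm (Z 0 m - Y 0 m)" for m
    by (rule norm_hatT_funpow_le[OF norm_order_projection_le[OF assms(1)] assms(4,3)])
  ultimately have "norm ((hatT \<xi> T ^^ l) (\<lambda>n. Z 0 n - Y 0 n) m)
      \<le> K ^ l * normW (\<lambda>k n. Z k n - Y k n)" for m
    by (meson order_trans)
  then have bound: "norm ((sshift ^^ k) ((hatT \<xi> T ^^ l) (\<lambda>n. Z 0 n - Y 0 n)) n)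
      \<le> K ^ l * normW (\<lambda>k n. Z k n - Y k n)" for k n
    by (rule norm_sshift_funpow_le)
  have diff: "hatT_shriek \<xi> T l Z k n - hatT_shriek \<xi> T l Y k n
      = (sshift ^^ k) ((hatT \<xi> T ^^ l) (\<lambda>n. Z 0 n - Y 0 n)) n" for k n
    by (simp add: hatT_shriek_def hatT_funpow_diff[OF lin assms(2)] sshift_funpow)
  show "norm (hatT_shriek \<xi> T l Z k n - hatT_shriek \<xi> T l Y k n)
      \<le> K ^ l * normW (\<lambda>k n. Z k n - Y k n)" for k n
    unfolding diff by (rule bound)
qed

lemma continuous_normW_if_Lipschitz:
  assumes "0 \<le> L"
    and "\<And>Y Z. Y \<in> A \<Longrightarrow> Z \<in> A \<Longrightarrow>
      normW (\<lambda>k n. G Z k n - G Y k n) \<le> L * normW (\<lambda>k n. Z k n - Y k n)"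
    and "Y \<in> A" "0 < e"
  shows "\<exists>d>0. \<forall>Z\<in>A.
    normW (\<lambda>k n. Z k n - Y k n) < d \<longrightarrow> normW (\<lambda>k n. G Z k n - G Y k n) < e"
proof (intro exI[of _ "e / (L + 1)"] conjI ballI impI)
  show "0 < e / (L + 1)"
    using assms by simp
  fix Z assume "Z \<in> A" and close: "normW (\<lambda>k n. Z k n - Y k n) < e / (L + 1)"
  have "normW (\<lambda>k n. G Z k n - G Y k n) \<le> L * normW (\<lambda>k n. Z k n - Y k n)"
    using assms(2,3) \<open>Z \<in> A\<close> by blast
  also have "\<dots> \<le> L * (e / (L + 1))"
    using mult_left_mono[OF less_imp_le[OF close] assms(1)] .
  also have "\<dots> < e"
    using assms(1,4) by (simp add: field_simps)
  finally show "normW (\<lambda>k n. G Z k n - G Y k n) < e" .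
qed

theorem theorem4p9:
  fixes \<BB> :: "('a::banach_lattice \<Rightarrow> 'a) set"
    and \<xi> :: "nat \<Rightarrow> 'a \<Rightarrow> 'a"
    and T :: "'a \<Rightarrow> 'a"
  assumes "KB_space TYPE('a)"
    and "boolean_subalgebra \<BB>"
    and "forward_filtration \<BB> \<xi>"
    and "volterra \<BB> T"
  shows "\<exists>F :: nat \<Rightarrow> (nat \<Rightarrow> nat \<Rightarrow> 'a) \<Rightarrow> (nat \<Rightarrow> nat \<Rightarrow> 'a).
     F 1 ` Bprime \<xi> \<subseteq> Bprime \<xi> \<and>
     (\<forall>l\<ge>1.
        F l ` Bprime \<xi> \<subseteq> Winf \<xi>
      \<and> (\<forall>Y\<in>Bprime \<xi>. \<forall>Z\<in>Bprime \<xi>. F l (\<lambda>k n. Y k n + Z k n) = (\<lambda>k n. F l Y k n + F l Z k n))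
      \<and> (\<forall>c. \<forall>Y\<in>Bprime \<xi>. F l (\<lambda>k n. c *\<^sub>R Y k n) = (\<lambda>k n. c *\<^sub>R F l Y k n))
      \<and> (\<forall>Y\<in>Bprime \<xi>. \<forall>e>0. \<exists>d>0. \<forall>Z\<in>Bprime \<xi>.
            normW (\<lambda>k n. Z k n - Y k n) < d \<longrightarrow> normW (\<lambda>k n. F l Z k n - F l Y k n) < e)
      \<and> (\<forall>x\<in>Mb \<xi>. F l (\<lambda>k. (sshift ^^ k) x) = (\<lambda>k. (sshift ^^ k) ((hatT \<xi> T ^^ l) x)))
      \<and> (\<forall>Y\<in>Bprime \<xi>. F l Y = (F 1 ^^ l) Y))"
proof -
  have proj: "\<And>n. \<xi> n \<in> order_projections"
    using assms(2,3) by (rule forward_filtration_order_projection)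
  then have lin: "\<And>n. linear (\<xi> n)"
    by (rule linear_order_projection)
  have lin_T: "linear T" and pos: "positive_operator T"
    using assms(4) by (simp_all add: volterra_def positive_operator_def)
  obtain K where K: "0 \<le> K" "\<And>y. norm (T y) \<le> K * norm y"
    using positive_operator_bounded[OF pos] by blast
  have maps_Bprime: "hatT_shriek \<xi> T l ` Bprime \<xi> \<subseteq> Bprime \<xi>" for l
    using hatT_shriek_in_Bprime[OF assms(2-4)] by blast
  then have maps_Winf: "hatT_shriek \<xi> T l ` Bprime \<xi> \<subseteq> Winf \<xi>" for l
    using Bprime_subset_Winf[of \<xi>, OF lin] by blast
  have Lipschitz: "normW (\<lambda>k n. hatT_shriek \<xi> T l Z k n - hatT_shriek \<xi> T l Y k n)
      \<le> K ^ l * normW (\<lambda>k n. Z k n - Y k n)" if "Y \<in> Bprime \<xi>" "Z \<in> Bprime \<xi>" for l Y Z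
    using that Bprime_subset_Winf[of \<xi>, OF lin]
    by (intro normW_hatT_shriek_diff_le[of \<xi>, OF proj lin_T K]) auto
  show ?thesis
  proof (intro exI[of _ "hatT_shriek \<xi> T"] conjI allI impI ballI)
    show "\<exists>d>0. \<forall>Z\<in>Bprime \<xi>. normW (\<lambda>k n. Z k n - Y k n) < d \<longrightarrow>
        normW (\<lambda>k n. hatT_shriek \<xi> T l Z k n - hatT_shriek \<xi> T l Y k n) < e"
      if "Y \<in> Bprime \<xi>" "0 < e" for l Y e
      by (rule continuous_normW_if_Lipschitz[OF zero_le_power[OF K(1)] Lipschitz that])
    show "hatT_shriek \<xi> T l Y = (hatT_shriek \<xi> T 1 ^^ l) Y" if "1 \<le> l" for l Y
      using hatT_shriek_funpow[OF that, symmetric] .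
  qed (simp_all add: maps_Bprime maps_Winf hatT_shriek_orbit
      hatT_shriek_add[OF lin lin_T] hatT_shriek_scaleR[OF lin lin_T])
qed

end
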